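(* Let $A=[a_{ij}]$ be a real $n\times n$ matrix with zero diagonal and $f(\sigma)=\sum_{p=1}^{n-1}\sum_{q=p+1}^n a_{\sigma(p)\sigma(q)}$ its LOP objective function on $\Sigma_n$. Let $k\le n$, let $i_1,\dots,i_k\in\{1,\dots,n\}$ be distinct, and let $S=\{\sigma\in\Sigma_n:\sigma(1)=i_1,\dots,\sigma(k)=i_k\}$. Then $$\frac{1}{|S|}\sum_{\sigma\in S}f(\sigma)=\sum_{r=1}^{k}\ \sum_{j\in\{1,\dots,n\}\setminus\{i_1,\dots,i_r\}}a_{i_r j}+\frac12\sum_{l,m\in\{1,\dots,n\}\setminus\{i_1,\dots,i_k\}}a_{lm}.$$
   Context: $\Sigma_n$ is the symmetric group on $\{1,\dots,n\}$; $\sigma(p)$ is the row/column index placed in position $p$. *)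

theory Defs
  imports "HOL-Analysis.Analysis" "HOL-Combinatorics.Permutations"
begin

definition lop_obj :: "nat \<Rightarrow> (nat \<Rightarrow> nat \<Rightarrow> real) \<Rightarrow> (nat \<Rightarrow> nat) \<Rightarrow> real" where
  "lop_obj n A \<sigma> = (\<Sum>p = 1..n-1. \<Sum>q = p+1..n. A (\<sigma> p) (\<sigma> q))"

end

theory Submission
  imports Defs
begin

text \<open>For every \<open>\<sigma> \<in> S\<close> the pairs of positions \<open>p < q\<close> with \<open>p \<le> k\<close> contribute the same
  amount, the first sum of the right-hand side. On the free positions \<open>k+1..n\<close>, composing
  \<open>\<sigma>\<close> with the reversal of these positions is an involution of \<open>S\<close> that turns each pair
  \<open>p < q\<close> into the reversed pair; so the free contributions of \<open>\<sigma>\<close> and of its partner add up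
  to the sum of \<open>A\<close> over all ordered pairs of free indices (the diagonal being zero), and
  their average is half of it.\<close>

lemma permutes_extend_inj_on:
  assumes "finite A" "B \<subseteq> A" "inj_on f B" "f ` B \<subseteq> A"
  obtains \<sigma> where "\<sigma> permutes A" "\<And>x. x \<in> B \<Longrightarrow> \<sigma> x = f x"
proof -
  have "card (A - B) = card (A - f ` B)"
    using assms by (simp add: card_Diff_subset card_image finite_subset)
  then obtain h where h: "bij_betw h (A - B) (A - f ` B)"
    using assms(1) by (metis finite_Diff finite_same_card_bij)
  define \<sigma> where "\<sigma> x = (if x \<in> B then f x else if x \<in> A then h x else x)" for x
  have "bij_betw \<sigma> B (f ` B)"
    using assms(3) by (subst bij_betw_cong[where g=f]) (auto simp: \<sigma>_def inj_on_imp_bij_betw)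
  moreover have "bij_betw \<sigma> (A - B) (A - f ` B)"
    using h by (subst bij_betw_cong[where g=h]) (auto simp: \<sigma>_def)
  ultimately have "bij_betw \<sigma> (B \<union> (A - B)) (f ` B \<union> (A - f ` B))"
    by (rule bij_betw_combine) auto
  then have "bij_betw \<sigma> A A"
    using assms(2,4) by (simp add: Un_absorb1)
  then have "\<sigma> permutes A"
    by (rule bij_imp_permutes) (use assms(2) in \<open>auto simp: \<sigma>_def\<close>)
  then show ?thesis
    using that by (auto simp: \<sigma>_def)
qed

lemma sum_involution_pairing:
  fixes f :: "'a \<Rightarrow> 'b::comm_semiring_1"
  assumes "\<And>x. x \<in> S \<Longrightarrow> h x \<in> S" "\<And>x. x \<in> S \<Longrightarrow> h (h x) = x"
    and "\<And>x. x \<in> S \<Longrightarrow> f x + f (h x) = c"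
  shows "2 * (\<Sum>x\<in>S. f x) = of_nat (card S) * c"
proof -
  have "(\<Sum>x\<in>S. f (h x)) = (\<Sum>x\<in>S. f x)"
    by (rule sum.reindex_bij_witness[where i=h and j=h]) (use assms(1,2) in auto)
  then have "2 * (\<Sum>x\<in>S. f x) = (\<Sum>x\<in>S. f x + f (h x))"
    by (simp add: sum.distrib mult_2)
  also have "\<dots> = of_nat (card S) * c"
    using assms(3) by simp
  finally show ?thesis .
qed

lemma sum_square_eq_triangles:
  fixes I :: "'a::linorder set" and B :: "'a \<Rightarrow> 'a \<Rightarrow> 'b::comm_monoid_add"
  assumes "finite I"
  shows "(\<Sum>(p, q)\<in>I \<times> I. B p q)
    = (\<Sum>(p, q)\<in>{(p, q) \<in> I \<times> I. p < q}. B p q + B q p) + (\<Sum>p\<in>I. B p p)"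
proof -
  let ?U = "{(p, q) \<in> I \<times> I. p < q}" and ?L = "{(p, q) \<in> I \<times> I. q < p}"
    and ?D = "{(p, q) \<in> I \<times> I. p = q}"
  have fin: "finite ?U" "finite ?L" "finite ?D"
    using assms by (auto intro: finite_subset[of _ "I \<times> I"])
  have "(\<Sum>(p, q)\<in>I \<times> I. B p q) = (\<Sum>(p, q)\<in>?U \<union> ?L \<union> ?D. B p q)"
    by (rule sum.cong) auto
  also have "\<dots> = (\<Sum>(p, q)\<in>?U. B p q) + (\<Sum>(p, q)\<in>?L. B p q) + (\<Sum>(p, q)\<in>?D. B p q)"
    using fin by (subst sum.union_disjoint, auto)+
  also have "(\<Sum>(p, q)\<in>?L. B p q) = (\<Sum>(p, q)\<in>?U. B q p)"
    by (rule sum.reindex_bij_witness[where i=prod.swap and j=prod.swap]) auto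
  also have "(\<Sum>(p, q)\<in>?D. B p q) = (\<Sum>p\<in>I. B p p)"
    by (rule sum.reindex_bij_witness[where i="\<lambda>p. (p, p)" and j=fst]) auto
  finally show ?thesis
    by (simp add: sum.distrib split_def)
qed

definition segment_reversal :: "nat \<Rightarrow> nat \<Rightarrow> nat \<Rightarrow> nat" where
  "segment_reversal k n p = (if k < p \<and> p \<le> n then n + k + 1 - p else p)"

lemma segment_reversal_involution [simp]:
  "segment_reversal k n (segment_reversal k n p) = p"
  by (auto simp: segment_reversal_def)

lemma segment_reversal_permutes: "segment_reversal k n permutes {k<..n}"
  by (rule bij_imp_permutes)
    (auto simp: segment_reversal_def intro!: bij_betw_byWitness[where f'="segment_reversal k n"])

definition lop_tail :: "nat \<Rightarrow> nat \<Rightarrow> (nat \<Rightarrow> nat \<Rightarrow> real) \<Rightarrow> (nat \<Rightarrow> nat) \<Rightarrow> real" where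
  "lop_tail k n A \<sigma> = (\<Sum>(p, q)\<in>{(p, q) \<in> {k<..n} \<times> {k<..n}. p < q}. A (\<sigma> p) (\<sigma> q))"

lemma lop_tail_nested: "lop_tail k n A \<sigma> = (\<Sum>p\<in>{k<..n}. \<Sum>q\<in>{p<..n}. A (\<sigma> p) (\<sigma> q))"
proof -
  have "{(p, q) \<in> {k<..n} \<times> {k<..n}. p < q} = Sigma {k<..n} (\<lambda>p. {p<..n})"
    by auto
  then show ?thesis
    by (simp add: lop_tail_def sum.Sigma)
qed

lemma lop_obj_split:
  assumes "k \<le> n"
  shows "lop_obj n A \<sigma> = (\<Sum>p = 1..k. \<Sum>q\<in>{p<..n}. A (\<sigma> p) (\<sigma> q)) + lop_tail k n A \<sigma>"
proof -
  have "lop_obj n A \<sigma> = (\<Sum>p = 1..n. \<Sum>q\<in>{p<..n}. A (\<sigma> p) (\<sigma> q))"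
    unfolding lop_obj_def
    by (rule sum.mono_neutral_cong_left) (auto simp: atLeastSucAtMost_greaterThanAtMost)
  also have "{1..n} = {1..k} \<union> {k<..n}"
    using assms by auto
  finally show ?thesis
    by (subst (asm) sum.union_disjoint) (auto simp: lop_tail_nested)
qed

lemma lop_tail_comp_reversal:
  "lop_tail k n A (\<sigma> \<circ> segment_reversal k n)
    = (\<Sum>(p, q)\<in>{(p, q) \<in> {k<..n} \<times> {k<..n}. p < q}. A (\<sigma> q) (\<sigma> p))"
proof -
  let ?\<tau> = "segment_reversal k n"
  let ?T = "{(p, q) \<in> {k<..n} \<times> {k<..n}. p < q}"
  have flip_in: "(?\<tau> q, ?\<tau> p) \<in> ?T" if "(p, q) \<in> ?T" for p q
    using that by (auto simp: segment_reversal_def)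
  show ?thesis
    unfolding lop_tail_def
    by (rule sum.reindex_bij_witness[where i="\<lambda>(p, q). (?\<tau> q, ?\<tau> p)"
          and j="\<lambda>(p, q). (?\<tau> q, ?\<tau> p)"])
      (use flip_in in auto)
qed

lemma lop_tail_add_comp_reversal:
  assumes "inj_on \<sigma> {k<..n}" and "\<And>l. l \<in> \<sigma> ` {k<..n} \<Longrightarrow> A l l = 0"
  shows "lop_tail k n A \<sigma> + lop_tail k n A (\<sigma> \<circ> segment_reversal k n)
    = (\<Sum>l\<in>\<sigma> ` {k<..n}. \<Sum>m\<in>\<sigma> ` {k<..n}. A l m)"
proof -
  let ?I = "{k<..n}"
  have "(\<Sum>l\<in>\<sigma> ` ?I. \<Sum>m\<in>\<sigma> ` ?I. A l m) = (\<Sum>p\<in>?I. \<Sum>q\<in>?I. A (\<sigma> p) (\<sigma> q))"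
    using assms(1) by (simp add: sum.reindex)
  also have "\<dots> = (\<Sum>(p, q)\<in>?I \<times> ?I. A (\<sigma> p) (\<sigma> q))"
    by (rule sum.cartesian_product)
  also have "\<dots> = (\<Sum>(p, q)\<in>{(p, q) \<in> ?I \<times> ?I. p < q}. A (\<sigma> p) (\<sigma> q) + A (\<sigma> q) (\<sigma> p))
      + (\<Sum>p\<in>?I. A (\<sigma> p) (\<sigma> p))"
    by (rule sum_square_eq_triangles) simp
  also have "(\<Sum>p\<in>?I. A (\<sigma> p) (\<sigma> p)) = 0"
    using assms(2) by simp
  finally show ?thesis
    unfolding lop_tail_comp_reversal by (simp add: lop_tail_def sum.distrib split_def)
qed

lemma permutes_image_greaterThanAtMost:
  fixes \<sigma> i :: "nat \<Rightarrow> nat"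
  assumes "\<sigma> permutes {1..n}" and "\<And>r. r \<in> {1..p} \<Longrightarrow> \<sigma> r = i r"
  shows "\<sigma> ` {p<..n} = {1..n} - i ` {1..p}"
proof -
  have "{p<..n} = {1..n} - {1..p}"
    by auto
  then have "\<sigma> ` {p<..n} = \<sigma> ` {1..n} - \<sigma> ` {1..p}"
    by (simp add: image_set_diff permutes_inj[OF assms(1)])
  also have "\<sigma> ` {1..n} = {1..n}"
    by (rule permutes_image[OF assms(1)])
  also have "\<sigma> ` {1..p} = i ` {1..p}"
    using assms(2) by simp
  finally show ?thesis .
qed

lemma lop_head_eq_prefix_sum:
  fixes \<sigma> i :: "nat \<Rightarrow> nat"
  assumes "\<sigma> permutes {1..n}" and "\<And>r. r \<in> {1..k} \<Longrightarrow> \<sigma> r = i r"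
  shows "(\<Sum>p = 1..k. \<Sum>q\<in>{p<..n}. A (\<sigma> p) (\<sigma> q))
    = (\<Sum>r = 1..k. \<Sum>j\<in>{1..n} - i ` {1..r}. A (i r) j)"
proof (rule sum.cong[OF refl])
  fix r assume r: "r \<in> {1..k}"
  have "(\<Sum>q\<in>{r<..n}. A (\<sigma> r) (\<sigma> q)) = (\<Sum>j\<in>\<sigma> ` {r<..n}. A (i r) j)"
    using assms r by (simp add: sum.reindex inj_on_subset[OF permutes_inj])
  also have "\<sigma> ` {r<..n} = {1..n} - i ` {1..r}"
    using r by (intro permutes_image_greaterThanAtMost assms) auto
  finally show "(\<Sum>q\<in>{r<..n}. A (\<sigma> r) (\<sigma> q)) = (\<Sum>j\<in>{1..n} - i ` {1..r}. A (i r) j)" .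
qed

definition prefix_perms :: "nat \<Rightarrow> nat \<Rightarrow> (nat \<Rightarrow> nat) \<Rightarrow> (nat \<Rightarrow> nat) set" where
  "prefix_perms n k i = {\<sigma>. \<sigma> permutes {1..n} \<and> (\<forall>r\<in>{1..k}. \<sigma> r = i r)}"

lemma finite_prefix_perms: "finite (prefix_perms n k i)"
  unfolding prefix_perms_def
  by (rule finite_subset[OF _ finite_permutations[of "{1..n}"]]) auto

lemma prefix_perms_nonempty:
  assumes "k \<le> n" and "i ` {1..k} \<subseteq> {1..n}" and "inj_on i {1..k}"
  shows "prefix_perms n k i \<noteq> {}"
proof -
  obtain \<sigma> where "\<sigma> permutes {1..n}" "\<And>r. r \<in> {1..k} \<Longrightarrow> \<sigma> r = i r"
    by (rule permutes_extend_inj_on[of "{1..n}" "{1..k}" i]) (use assms in auto)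
  then show ?thesis
    by (auto simp: prefix_perms_def)
qed

lemma comp_segment_reversal_in_prefix_perms:
  assumes "\<sigma> \<in> prefix_perms n k i"
  shows "\<sigma> \<circ> segment_reversal k n \<in> prefix_perms n k i"
proof -
  have "segment_reversal k n permutes {1..n}"
    by (rule permutes_subset[OF segment_reversal_permutes]) auto
  then show ?thesis
    using assms by (auto simp: prefix_perms_def segment_reversal_def permutes_compose)
qed

lemma lop_obj_prefix_perm:
  assumes "\<sigma> \<in> prefix_perms n k i" and "k \<le> n"
  shows "lop_obj n A \<sigma>
    = (\<Sum>r = 1..k. \<Sum>j\<in>{1..n} - i ` {1..r}. A (i r) j) + lop_tail k n A \<sigma>"
  using assms lop_head_eq_prefix_sum[of \<sigma> n k i A]
  by (simp add: lop_obj_split prefix_perms_def)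

lemma lop_tail_add_comp_reversal_prefix_perm:
  assumes "\<sigma> \<in> prefix_perms n k i" and "\<And>j. j \<in> {1..n} \<Longrightarrow> A j j = 0"
  shows "lop_tail k n A \<sigma> + lop_tail k n A (\<sigma> \<circ> segment_reversal k n)
    = (\<Sum>l\<in>{1..n} - i ` {1..k}. \<Sum>m\<in>{1..n} - i ` {1..k}. A l m)"
proof -
  have perm: "\<sigma> permutes {1..n}"
    using assms(1) by (simp add: prefix_perms_def)
  have "\<sigma> ` {k<..n} = {1..n} - i ` {1..k}"
    using assms(1) by (intro permutes_image_greaterThanAtMost perm) (simp add: prefix_perms_def)
  moreover have "inj_on \<sigma> {k<..n}"
    using permutes_inj[OF perm] by (rule inj_on_subset) simp
  ultimately show ?thesis
    using assms(2) by (subst lop_tail_add_comp_reversal) auto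
qed

theorem proposition5:
  fixes n k :: nat and A :: "nat \<Rightarrow> nat \<Rightarrow> real" and i :: "nat \<Rightarrow> nat"
  assumes zero_diag: "\<And>j. j \<in> {1..n} \<Longrightarrow> A j j = 0"
    and kn: "k \<le> n"
    and i_range: "\<And>r. r \<in> {1..k} \<Longrightarrow> i r \<in> {1..n}"
    and i_inj: "inj_on i {1..k}"
  defines "S \<equiv> {\<sigma>. \<sigma> permutes {1..n} \<and> (\<forall>r\<in>{1..k}. \<sigma> r = i r)}"
  shows "(\<Sum>\<sigma>\<in>S. lop_obj n A \<sigma>) / real (card S)
       = (\<Sum>r = 1..k. \<Sum>j \<in> {1..n} - i ` {1..r}. A (i r) j)
         + 1/2 * (\<Sum>l \<in> {1..n} - i ` {1..k}. \<Sum>m \<in> {1..n} - i ` {1..k}. A l m)"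
proof -
  have S_def': "S = prefix_perms n k i"
    by (simp add: S_def prefix_perms_def)
  have tail_pair_sum: "lop_tail k n A \<sigma> + lop_tail k n A (\<sigma> \<circ> segment_reversal k n)
      = (\<Sum>l\<in>{1..n} - i ` {1..k}. \<Sum>m\<in>{1..n} - i ` {1..k}. A l m)"
    if "\<sigma> \<in> prefix_perms n k i" for \<sigma>
    using that zero_diag by (rule lop_tail_add_comp_reversal_prefix_perm)
  have "2 * (\<Sum>\<sigma>\<in>S. lop_tail k n A \<sigma>)
      = real (card S) * (\<Sum>l\<in>{1..n} - i ` {1..k}. \<Sum>m\<in>{1..n} - i ` {1..k}. A l m)"
    unfolding S_def'
    by (rule sum_involution_pairing[where h="\<lambda>\<sigma>. \<sigma> \<circ> segment_reversal k n"])
      (auto simp: fun_eq_iff comp_segment_reversal_in_prefix_perms tail_pair_sum)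
  moreover have "(\<Sum>\<sigma>\<in>S. lop_obj n A \<sigma>)
      = real (card S) * (\<Sum>r = 1..k. \<Sum>j\<in>{1..n} - i ` {1..r}. A (i r) j)
        + (\<Sum>\<sigma>\<in>S. lop_tail k n A \<sigma>)"
    unfolding S_def' by (simp add: lop_obj_prefix_perm kn sum.distrib)
  moreover have "card S > 0"
    unfolding S_def'
    using prefix_perms_nonempty[OF kn image_subsetI[OF i_range] i_inj] finite_prefix_perms
    by (simp add: card_gt_0_iff)
  ultimately show ?thesis
    by (simp add: field_simps)
qed

end
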